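(* Every $2\times2$ minor of $X$ lies in the ideal $\mathcal{I}'+\big(\wedge^2(B_1|B_2),\ \mathrm{Tr}(A)+2\pi,\ \text{entries of } B_2J_{n-r}B_1^{t}-AJ_{l}\big)$ of $S$.
   Context: Let $p$ be an odd prime, $F/\mathbb{Q}_p$ a finite extension with uniformizer $\pi$, $\mathcal{O}$ the ring of integers of the completion $\breve F$ of the maximal unramified extension of $F$ ($\pi$ is a uniformizer of $\mathcal{O}$, $2\in\mathcal{O}^\times$). Let $n\ge3$ and $1\le r\le n-1$ be integers, $d=2n$, $l=2r$. Let $X=(x_{i,j})_{1\le i,j\le d}$ be a matrix of indeterminates and $S=\mathcal{O}[(x_{i,j})]$. Write $X$ in block form $X=\begin{pmatrix}E_1&O_1&E_2\\ B_1&A&B_2\\ E_3&O_2&E_4\end{pmatrix}$ with $E_c$ of size $(n-r)\times(n-r)$, $O_1,O_2$ of size $(n-r)\times l$, $B_1,B_2$ of size $l\times(n-r)$, $A$ of size $l\times l$. Let $Z=\{n-r+1,\dots,n+r\}$ and $Z^c=\{1,\dots,d\}\setminus Z$. Let $J_m$ be the $m\times m$ antidiagonal matrix with $1$'s on the antidiagonal. Let $\wedge^2(B_1|B_2)$ denote the set of elements $x_{i,j}x_{t,s}-x_{i,s}x_{t,j}$ with $i,t\in Z$, $j,s\in Z^c$. Let $\mathcal{I}'\subset S$ be the ideal generated by the entries of the six matrices $E_1+\tfrac12J_{n-r}B_2^tJ_lB_1$, $E_2+\tfrac12J_{n-r}B_2^tJ_lB_2$, $E_3+\tfrac12J_{n-r}B_1^tJ_lB_1$,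 $E_4+\tfrac12J_{n-r}B_1^tJ_lB_2$, $O_1+\tfrac12J_{n-r}B_2^tJ_lA$, $O_2+\tfrac12J_{n-r}B_1^tJ_lA$. *)

theory Defs
  imports Main "HOL-Library.Poly_Mapping"
begin

text \<open>Multivariate polynomials over a coefficient ring 'a in the indeterminates
  x_(i,j), represented as finitely supported maps from monomials (finitely supported
  exponent vectors on nat*nat) to coefficients.\<close>
type_synonym 'a mpoly = "((nat \<times> nat) \<Rightarrow>\<^sub>0 nat) \<Rightarrow>\<^sub>0 'a"

definition Var :: "nat \<Rightarrow> nat \<Rightarrow> 'a::comm_ring_1 mpoly" where
  "Var i j = Poly_Mapping.single (Poly_Mapping.single (i, j) 1) 1"

definition Const :: "'a::comm_ring_1 \<Rightarrow> 'a mpoly" where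
  "Const c = Poly_Mapping.single 0 c"

definition ideal_gen :: "'b::comm_ring_1 set \<Rightarrow> 'b set" where
  "ideal_gen G = {x. \<exists>F c. finite F \<and> F \<subseteq> G \<and> x = (\<Sum>g\<in>F. c g * g)}"

text \<open>Matrices as functions with 1-based indices.\<close>
type_synonym 'b matf = "nat \<Rightarrow> nat \<Rightarrow> 'b"

definition mmul :: "nat \<Rightarrow> 'b::comm_ring_1 matf \<Rightarrow> 'b matf \<Rightarrow> 'b matf" where
  "mmul k M N = (\<lambda>i j. \<Sum>t=1..k. M i t * N t j)"

definition mtrans :: "'b matf \<Rightarrow> 'b matf" where
  "mtrans M = (\<lambda>i j. M j i)"

definition antiJ :: "nat \<Rightarrow> 'b::comm_ring_1 matf" where
  "antiJ m = (\<lambda>i j. if i + j = m + 1 then 1 else 0)"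

definition madd :: "'b::comm_ring_1 matf \<Rightarrow> 'b matf \<Rightarrow> 'b matf" where
  "madd M N = (\<lambda>i j. M i j + N i j)"

definition msub :: "'b::comm_ring_1 matf \<Rightarrow> 'b matf \<Rightarrow> 'b matf" where
  "msub M N = (\<lambda>i j. M i j - N i j)"

definition msmul :: "'b::comm_ring_1 \<Rightarrow> 'b matf \<Rightarrow> 'b matf" where
  "msmul c M = (\<lambda>i j. c * M i j)"

definition block :: "'b matf \<Rightarrow> nat \<Rightarrow> nat \<Rightarrow> 'b matf" where
  "block M r0 c0 = (\<lambda>i j. M (r0 + i) (c0 + j))"

definition entries :: "'b matf \<Rightarrow> nat \<Rightarrow> nat \<Rightarrow> 'b set" where
  "entries M p q = {M i j | i j. 1 \<le> i \<and> i \<le> p \<and> 1 \<le> j \<and> j \<le> q}"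

definition mtrace :: "'b::comm_ring_1 matf \<Rightarrow> nat \<Rightarrow> 'b" where
  "mtrace M k = (\<Sum>i=1..k. M i i)"

definition Xmat :: "'a::comm_ring_1 mpoly matf" where
  "Xmat = (\<lambda>i j. Var i j)"

text \<open>The ideal I' for parameters n, r and h = 1/2 (so l = 2r, m = n - r).\<close>
definition Iprime_gens :: "nat \<Rightarrow> nat \<Rightarrow> 'a::comm_ring_1 \<Rightarrow> 'a mpoly set" where
  "Iprime_gens n r h = (let m = n - r; l = 2 * r; X = (Xmat :: 'a mpoly matf);
     E1 = block X 0 0; O1 = block X 0 m; E2 = block X 0 (m + l);
     B1 = block X m 0; A = block X m m; B2 = block X m (m + l);
     E3 = block X (m + l) 0; O2 = block X (m + l) m; E4 = block X (m + l) (m + l);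
     hh = Const h;
     P = (\<lambda>U V. msmul hh (mmul l (mmul m (antiJ m) (mtrans U)) (mmul l (antiJ l) V)))
   in entries (madd E1 (P B2 B1)) m m \<union> entries (madd E2 (P B2 B2)) m m
    \<union> entries (madd E3 (P B1 B1)) m m \<union> entries (madd E4 (P B1 B2)) m m
    \<union> entries (madd O1 (P B2 A)) m l \<union> entries (madd O2 (P B1 A)) m l)"

end

theory Submission
  imports Defs "HOL.Modules"
begin

text \<open>Modulo the relations \<open>\<I>'\<close>, each of the first and last \<open>n - r\<close> rows of \<open>X\<close> is a
  combination, with coefficients independent of the column, of the middle rows \<open>Z\<close>. Since a
  \<open>2 \<times> 2\<close> minor is bilinear in its two rows, every minor reduces to minors with both rows in \<open>Z\<close>.
  Dually, the relations \<open>B\<^sub>2 J B\<^sub>1\<^sup>t = A J\<close> express each column of \<open>X\<close> indexed by \<open>Z\<close>, restricted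
  to the rows in \<open>Z\<close>, as a combination of the columns outside \<open>Z\<close>; so those minors reduce further
  to minors with rows in \<open>Z\<close> and columns outside \<open>Z\<close>, which are the generators \<open>\<wedge>\<^sup>2(B\<^sub>1|B\<^sub>2)\<close>.\<close>


text \<open>A global interpretation of \<open>module (*)\<close> is avoided: its simp rule \<open>scale_scale\<close> loops
  against \<open>algebra_simps\<close>.\<close>

lemma module_mult: "module ((*) :: 'a::comm_ring_1 \<Rightarrow> 'a \<Rightarrow> 'a)"
  by unfold_locales (simp_all add: algebra_simps)

lemma ideal_gen_eq_span: "ideal_gen G = module.span (*) G"
  by (auto simp: ideal_gen_def module.span_explicit[OF module_mult])

lemma ideal_gen_base: "g \<in> G \<Longrightarrow> g \<in> ideal_gen G"
  by (simp add: ideal_gen_eq_span module.span_base[OF module_mult])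

lemma ideal_gen_zero: "0 \<in> ideal_gen G"
  by (simp add: ideal_gen_eq_span module.span_zero[OF module_mult])

lemma ideal_gen_add: "x \<in> ideal_gen G \<Longrightarrow> y \<in> ideal_gen G \<Longrightarrow> x + y \<in> ideal_gen G"
  by (simp add: ideal_gen_eq_span module.span_add[OF module_mult])

lemma ideal_gen_diff: "x \<in> ideal_gen G \<Longrightarrow> y \<in> ideal_gen G \<Longrightarrow> x - y \<in> ideal_gen G"
  by (simp add: ideal_gen_eq_span module.span_diff[OF module_mult])

lemma ideal_gen_uminus: "x \<in> ideal_gen G \<Longrightarrow> - x \<in> ideal_gen G"
  by (simp add: ideal_gen_eq_span module.span_neg[OF module_mult])

lemma ideal_gen_mult: "x \<in> ideal_gen G \<Longrightarrow> c * x \<in> ideal_gen G"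
  by (simp add: ideal_gen_eq_span module.span_scale[OF module_mult])

lemma ideal_gen_sum: "(\<And>x. x \<in> A \<Longrightarrow> f x \<in> ideal_gen G) \<Longrightarrow> sum f A \<in> ideal_gen G"
  by (simp add: ideal_gen_eq_span module.span_sum[OF module_mult])

definition row_reducible :: "'b::comm_ring_1 set \<Rightarrow> 'b matf \<Rightarrow> nat \<Rightarrow> nat set \<Rightarrow> nat set \<Rightarrow> bool" where
  "row_reducible I M i R C \<longleftrightarrow>
     (\<exists>(T :: nat set) \<alpha> \<rho>. finite T \<and> \<rho> ` T \<subseteq> R \<and> (\<forall>j\<in>C. M i j - (\<Sum>t\<in>T. \<alpha> t * M (\<rho> t) j) \<in> I))"

lemma row_reducible_refl: "i \<in> R \<Longrightarrow> row_reducible (ideal_gen G) M i R C"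
  unfolding row_reducible_def
  by (intro exI[of _ "{i}"] exI[of _ "\<lambda>_. 1"] exI[of _ id]) (simp add: ideal_gen_zero)

lemma sum_mult_sum_minus_sum_mult_sum:
  fixes a x z :: "'i \<Rightarrow> 'b::comm_ring_1" and b w y :: "'j \<Rightarrow> 'b"
  shows "(\<Sum>t\<in>T. a t * x t) * (\<Sum>u\<in>U. b u * w u) - (\<Sum>t\<in>T. a t * z t) * (\<Sum>u\<in>U. b u * y u)
    = (\<Sum>t\<in>T. \<Sum>u\<in>U. (a t * b u) * (x t * w u - z t * y u))"
  by (simp add: sum_product sum_subtractf[symmetric] algebra_simps)

lemma minor_mem_ideal_gen_if_rows_reducible:
  fixes M :: "'b::comm_ring_1 matf"
  assumes "row_reducible (ideal_gen G) M i R C" "row_reducible (ideal_gen G) M i' R C"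
    and "j \<in> C" "s \<in> C"
    and minors: "\<And>k k'. k \<in> R \<Longrightarrow> k' \<in> R \<Longrightarrow> M k j * M k' s - M k s * M k' j \<in> ideal_gen G"
  shows "M i j * M i' s - M i s * M i' j \<in> ideal_gen G"
proof -
  obtain T :: "nat set" and \<alpha> \<rho> where T: "finite T" "\<rho> ` T \<subseteq> R"
    and red: "\<forall>c\<in>C. M i c - (\<Sum>t\<in>T. \<alpha> t * M (\<rho> t) c) \<in> ideal_gen G"
    using assms(1) unfolding row_reducible_def by blast
  obtain T' :: "nat set" and \<alpha>' \<rho>' where T': "finite T'" "\<rho>' ` T' \<subseteq> R"
    and red': "\<forall>c\<in>C. M i' c - (\<Sum>t\<in>T'. \<alpha>' t * M (\<rho>' t) c) \<in> ideal_gen G"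
    using assms(2) unfolding row_reducible_def by blast
  define y where "y c = (\<Sum>t\<in>T. \<alpha> t * M (\<rho> t) c)" for c
  define y' where "y' c = (\<Sum>t\<in>T'. \<alpha>' t * M (\<rho>' t) c)" for c
  have "y j * y' s - y s * y' j =
      (\<Sum>t\<in>T. \<Sum>t'\<in>T'. (\<alpha> t * \<alpha>' t') * (M (\<rho> t) j * M (\<rho>' t') s - M (\<rho> t) s * M (\<rho>' t') j))"
    unfolding y_def y'_def by (rule sum_mult_sum_minus_sum_mult_sum)
  also have "\<dots> \<in> ideal_gen G"
    using T T' minors
    by (auto intro!: ideal_gen_sum ideal_gen_mult)
  finally have bilinear: "y j * y' s - y s * y' j \<in> ideal_gen G" .
  have "M i j * M i' s - M i s * M i' j =
      M i' s * (M i j - y j) + y j * (M i' s - y' s)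
      - M i' j * (M i s - y s) - y s * (M i' j - y' j) + (y j * y' s - y s * y' j)"
    by (simp add: algebra_simps)
  also have "\<dots> \<in> ideal_gen G"
    using bspec[OF red assms(3)] bspec[OF red assms(4)] bspec[OF red' assms(3)] bspec[OF red' assms(4)] bilinear
    unfolding y_def[symmetric] y'_def[symmetric]
    by (intro ideal_gen_add[OF ideal_gen_diff[OF ideal_gen_diff[OF ideal_gen_add]]] ideal_gen_mult)
  finally show ?thesis .
qed

lemma mmul_antiJ_left:
  assumes "1 \<le> t" "t \<le> l"
  shows "mmul l (antiJ l) V t b = V (l + 1 - t) b"
proof -
  have "mmul l (antiJ l) V t b = (\<Sum>u\<in>{1..l}. if u = l + 1 - t then V u b else 0)"
    unfolding mmul_def antiJ_def using assms by (intro sum.cong) auto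
  also have "\<dots> = V (l + 1 - t) b"
    using assms by auto
  finally show ?thesis .
qed

lemma mmul_antiJ_right:
  assumes "1 \<le> b" "b \<le> l"
  shows "mmul l V (antiJ l) a b = V a (l + 1 - b)"
proof -
  have "mmul l V (antiJ l) a b = (\<Sum>u\<in>{1..l}. if u = l + 1 - b then V a u else 0)"
    unfolding mmul_def antiJ_def using assms by (intro sum.cong) auto
  also have "\<dots> = V a (l + 1 - b)"
    using assms by auto
  finally show ?thesis .
qed

lemma mmul_mmul_antiJ_left:
  "mmul l W (mmul l (antiJ l) V) a b = (\<Sum>t=1..l. W a t * V (l + 1 - t) b)"
  unfolding mmul_def[of l W] by (intro sum.cong) (simp_all add: mmul_antiJ_left)

lemma mmul_mmul_antiJ_right:
  "mmul l (mmul l V (antiJ l)) W a b = (\<Sum>t=1..l. V a (l + 1 - t) * W t b)"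
  unfolding mmul_def[of l "mmul l V (antiJ l)"] by (intro sum.cong) (simp_all add: mmul_antiJ_right)

lemma entries_memI: "1 \<le> a \<Longrightarrow> a \<le> p \<Longrightarrow> 1 \<le> b \<Longrightarrow> b \<le> q \<Longrightarrow> M a b \<in> entries M p q"
  unfolding entries_def by blast

text \<open>The row blocks \<open>(E\<^sub>1 O\<^sub>1 E\<^sub>2)\<close> and \<open>(E\<^sub>3 O\<^sub>2 E\<^sub>4)\<close> start after row \<open>r0\<close> and are paired with
  \<open>U = B\<^sub>2\<close> resp. \<open>U = B\<^sub>1\<close>; \<open>c\<close> and \<open>w\<close> are the offset and width of a column block.\<close>

lemma Iprime_gens_outer_blocks:
  assumes "r \<le> n"
    and "(r0, U) \<in> {(0, block Xmat (n - r) (n + r)), (n + r, block Xmat (n - r) 0)}"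
    and "(c, w) \<in> {(0, n - r), (n - r, 2 * r), (n + r, n - r)}"
  shows "entries (madd (block Xmat r0 c)
      (msmul (Const h) (mmul (2 * r) (mmul (n - r) (antiJ (n - r)) (mtrans U))
                                     (mmul (2 * r) (antiJ (2 * r)) (block Xmat (n - r) c)))))
      (n - r) w \<subseteq> Iprime_gens n r h"
proof -
  have m_l: "n - r + 2 * r = n + r"
    using assms(1) by simp
  from assms(2,3) show ?thesis
    unfolding Iprime_gens_def Let_def m_l
    by (elim insertE emptyE; simp only: prod.inject; elim conjE; simp only:; blast)
qed

lemma Iprime_gens_outer_row:
  assumes "r \<le> n"
    and "(r0, U) \<in> {(0, block Xmat (n - r) (n + r)), (n + r, block Xmat (n - r) 0)}"
    and "1 \<le> a" "a \<le> n - r" "1 \<le> j" "j \<le> 2 * n"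
  shows "Var (r0 + a) j + Const h * (\<Sum>t=1..2 * r.
      mmul (n - r) (antiJ (n - r)) (mtrans U) a t * Var (n - r + (2 * r + 1 - t)) j) \<in> Iprime_gens n r h"
proof -
  obtain c w where cw: "(c, w) \<in> {(0, n - r), (n - r, 2 * r), (n + r, n - r)}" "c < j" "j \<le> c + w"
  proof -
    consider "j \<le> n - r" | "n - r < j" "j \<le> n + r" | "n + r < j"
      by linarith
    then show thesis
    proof cases
      case 1
      then show thesis using assms by (intro that[of 0 "n - r"]) auto
    next
      case 2
      then show thesis using assms by (intro that[of "n - r" "2 * r"]) auto
    next
      case 3
      then show thesis using assms by (intro that[of "n + r" "n - r"]) auto
    qed
  qed
  let ?gen = "madd (block Xmat r0 c)
      (msmul (Const h) (mmul (2 * r) (mmul (n - r) (antiJ (n - r)) (mtrans U))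
                                     (mmul (2 * r) (antiJ (2 * r)) (block Xmat (n - r) c))))"
  have "Var (r0 + a) j + Const h * (\<Sum>t=1..2 * r.
      mmul (n - r) (antiJ (n - r)) (mtrans U) a t * Var (n - r + (2 * r + 1 - t)) j) = ?gen a (j - c)"
    using cw(2) by (simp add: madd_def msmul_def mmul_mmul_antiJ_left block_def Xmat_def)
  also have "\<dots> \<in> entries ?gen (n - r) w"
    using assms cw by (intro entries_memI) auto
  also have "\<dots> \<subseteq> Iprime_gens n r h"
    using assms(1,2) cw(1) by (rule Iprime_gens_outer_blocks)
  finally show ?thesis .
qed

lemma row_reducible_Xmat_middle_rows:
  fixes G :: "'a::comm_ring_1 mpoly set"
  assumes "r \<le> n" "Iprime_gens n r h \<subseteq> G" "i \<in> {1..2 * n}"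
  shows "row_reducible (ideal_gen G) Xmat i {n - r + 1..n + r} {1..2 * n}"
proof (cases "i \<in> {n - r + 1..n + r}")
  case True
  then show ?thesis by (rule row_reducible_refl)
next
  case False
  obtain r0 a and U :: "'a mpoly matf"
    where r0U: "(r0, U) \<in> {(0, block Xmat (n - r) (n + r)), (n + r, block Xmat (n - r) 0)}"
    and a: "1 \<le> a" "a \<le> n - r" "i = r0 + a"
  proof (cases "i \<le> n - r")
    case True
    then show thesis using assms(3) by (intro that[of 0 "block Xmat (n - r) (n + r)" i]) auto
  next
    case bottom: False
    show thesis
      using assms(1,3) False bottom by (intro that[of "n + r" "block Xmat (n - r) 0" "i - (n + r)"]) auto
  qed
  let ?W = "mmul (n - r) (antiJ (n - r)) (mtrans U)"
  show ?thesis
    unfolding row_reducible_def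
  proof (intro exI[of _ "{1..2 * r}"] exI[of _ "\<lambda>t. - (Const h * ?W a t)"]
      exI[of _ "\<lambda>t. n - r + (2 * r + 1 - t)"] conjI ballI)
    show "(\<lambda>t. n - r + (2 * r + 1 - t)) ` {1..2 * r} \<subseteq> {n - r + 1..n + r}"
      using assms(1) by auto
  next
    fix j assume "j \<in> {1..2 * n}"
    then have "Var (r0 + a) j + Const h * (\<Sum>t=1..2 * r. ?W a t * Var (n - r + (2 * r + 1 - t)) j) \<in> G"
      using assms(1,2) r0U a by (intro subsetD[OF assms(2)] Iprime_gens_outer_row) auto
    then show "Xmat i j - (\<Sum>t\<in>{1..2 * r}. - (Const h * ?W a t) * Xmat (n - r + (2 * r + 1 - t)) j)
        \<in> ideal_gen G"
      using a(3) by (simp add: Xmat_def sum_distrib_left sum_negf mult.assoc ideal_gen_base)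
  qed simp
qed

abbreviation BJB_minus_AJ :: "nat \<Rightarrow> nat \<Rightarrow> 'a::comm_ring_1 mpoly matf" where
  "BJB_minus_AJ n r \<equiv>
     msub (mmul (n - r) (mmul (n - r) (block Xmat (n - r) (n + r)) (antiJ (n - r))) (mtrans (block Xmat (n - r) 0)))
          (mmul (2 * r) (block Xmat (n - r) (n - r)) (antiJ (2 * r)))"

lemma BJB_minus_AJ_entry:
  assumes "1 \<le> a" "a \<le> 2 * r" "1 \<le> b" "b \<le> 2 * r"
  shows "BJB_minus_AJ n r a b =
    (\<Sum>u=1..n - r. Var (n - r + a) (n + r + (n - r + 1 - u)) * Var (n - r + b) u)
      - Var (n - r + a) (n - r + (2 * r + 1 - b))"
  using assms by (simp add: msub_def mmul_mmul_antiJ_right mmul_antiJ_right block_def Xmat_def mtrans_def)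

lemma row_reducible_transpose_Xmat_outer_columns:
  fixes G :: "'a::comm_ring_1 mpoly set"
  assumes "r \<le> n" "entries (BJB_minus_AJ n r) (2 * r) (2 * r) \<subseteq> G" "j \<in> {1..2 * n}"
  shows "row_reducible (ideal_gen G) (mtrans Xmat) j ({1..2 * n} - {n - r + 1..n + r}) {n - r + 1..n + r}"
proof (cases "j \<in> {n - r + 1..n + r}")
  case False
  with assms(3) show ?thesis by (intro row_reducible_refl) simp
next
  case True
  define b where "b = 2 * r + 1 - (j - (n - r))"
  have b: "1 \<le> b" "b \<le> 2 * r" "n - r + (2 * r + 1 - b) = j"
    using True assms(1) by (auto simp: b_def)
  show ?thesis
    unfolding row_reducible_def
  proof (intro exI[of _ "{1..n - r}"] exI[of _ "\<lambda>u. Var (n - r + b) u"]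
      exI[of _ "\<lambda>u. n + r + (n - r + 1 - u)"] conjI ballI)
    show "(\<lambda>u. n + r + (n - r + 1 - u)) ` {1..n - r} \<subseteq> {1..2 * n} - {n - r + 1..n + r}"
      using assms(1) by auto
  next
    fix k assume k: "k \<in> {n - r + 1..n + r}"
    then have gen: "BJB_minus_AJ n r (k - (n - r)) b \<in> G"
      using b assms(1) by (intro subsetD[OF assms(2)] entries_memI) auto
    have "BJB_minus_AJ n r (k - (n - r)) b =
        (\<Sum>u=1..n - r. Var (n - r + (k - (n - r))) (n + r + (n - r + 1 - u)) * Var (n - r + b) u)
          - Var (n - r + (k - (n - r))) (n - r + (2 * r + 1 - b))"
      using k b assms(1) by (intro BJB_minus_AJ_entry) auto
    also have "n - r + (k - (n - r)) = k"
      using k by auto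
    finally have entry: "BJB_minus_AJ n r (k - (n - r)) b =
        (\<Sum>u=1..n - r. Var k (n + r + (n - r + 1 - u)) * Var (n - r + b) u) - Var k (n - r + (2 * r + 1 - b))" .
    have eq: "mtrans Xmat j k - (\<Sum>u\<in>{1..n - r}. Var (n - r + b) u * mtrans Xmat (n + r + (n - r + 1 - u)) k)
        = - BJB_minus_AJ n r (k - (n - r)) b"
      unfolding entry unfolding b(3) mtrans_def Xmat_def by (simp add: mult.commute)
    show "mtrans Xmat j k - (\<Sum>u\<in>{1..n - r}. Var (n - r + b) u * mtrans Xmat (n + r + (n - r + 1 - u)) k)
        \<in> ideal_gen G"
      unfolding eq by (rule ideal_gen_uminus[OF ideal_gen_base[OF gen]])
  qed simp
qed

lemma minor_mem_ideal_gen_middle_rows: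
  fixes G :: "'a::comm_ring_1 mpoly set"
  assumes "r \<le> n"
    and wedge: "\<And>k k' u u'. k \<in> {n - r + 1..n + r} \<Longrightarrow> k' \<in> {n - r + 1..n + r}
      \<Longrightarrow> u \<in> {1..2 * n} - {n - r + 1..n + r} \<Longrightarrow> u' \<in> {1..2 * n} - {n - r + 1..n + r}
      \<Longrightarrow> Var k u * Var k' u' - Var k u' * Var k' u \<in> G"
    and "entries (BJB_minus_AJ n r) (2 * r) (2 * r) \<subseteq> G"
    and "k \<in> {n - r + 1..n + r}" "k' \<in> {n - r + 1..n + r}" "j \<in> {1..2 * n}" "s \<in> {1..2 * n}"
  shows "Var k j * Var k' s - Var k s * Var k' j \<in> ideal_gen G"
proof -
  have "mtrans Xmat j k * mtrans Xmat s k' - mtrans Xmat j k' * mtrans Xmat s k \<in> ideal_gen G"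
  proof (rule minor_mem_ideal_gen_if_rows_reducible
      [where R = "{1..2 * n} - {n - r + 1..n + r}" and C = "{n - r + 1..n + r}"])
    fix u u' assume "u \<in> {1..2 * n} - {n - r + 1..n + r}" "u' \<in> {1..2 * n} - {n - r + 1..n + r}"
    with assms(4,5) have "Var k u * Var k' u' - Var k u' * Var k' u \<in> G"
      by (rule wedge)
    then show "mtrans Xmat u k * mtrans Xmat u' k' - mtrans Xmat u k' * mtrans Xmat u' k \<in> ideal_gen G"
      by (simp add: mtrans_def Xmat_def mult.commute ideal_gen_base)
  qed (intro row_reducible_transpose_Xmat_outer_columns assms(1,3-7))+
  then show ?thesis
    by (simp add: mtrans_def Xmat_def mult.commute)
qed

lemma minor_mem_ideal_gen:
  fixes G :: "'a::comm_ring_1 mpoly set"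
  assumes "r \<le> n"
    and "Iprime_gens n r h \<subseteq> G"
    and "\<And>k k' u u'. k \<in> {n - r + 1..n + r} \<Longrightarrow> k' \<in> {n - r + 1..n + r}
      \<Longrightarrow> u \<in> {1..2 * n} - {n - r + 1..n + r} \<Longrightarrow> u' \<in> {1..2 * n} - {n - r + 1..n + r}
      \<Longrightarrow> Var k u * Var k' u' - Var k u' * Var k' u \<in> G"
    and "entries (BJB_minus_AJ n r) (2 * r) (2 * r) \<subseteq> G"
    and "i \<in> {1..2 * n}" "t \<in> {1..2 * n}" "j \<in> {1..2 * n}" "s \<in> {1..2 * n}"
  shows "Var i j * Var t s - Var i s * Var t j \<in> ideal_gen G"
proof -
  have "Xmat i j * Xmat t s - Xmat i s * Xmat t j \<in> ideal_gen G"
  proof (rule minor_mem_ideal_gen_if_rows_reducible[where R = "{n - r + 1..n + r}" and C = "{1..2 * n}"])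
    fix k k' assume "k \<in> {n - r + 1..n + r}" "k' \<in> {n - r + 1..n + r}"
    with assms(1,3,4,7,8) have "Var k j * Var k' s - Var k s * Var k' j \<in> ideal_gen G"
      by (intro minor_mem_ideal_gen_middle_rows)
    then show "Xmat k j * Xmat k' s - Xmat k s * Xmat k' j \<in> ideal_gen G"
      by (simp add: Xmat_def)
  qed (intro row_reducible_Xmat_middle_rows[OF assms(1,2)] assms(5-8))+
  then show ?thesis
    by (simp add: Xmat_def)
qed

theorem lemma4p9:
  fixes n r :: nat and \<pi> h :: "'a::{idom, ring_char_0}"
  assumes "n \<ge> 3" and "1 \<le> r" and "r \<le> n - 1"
    and "2 * h = 1"
    and "\<pi> \<noteq> 0" and "\<not> \<pi> dvd 1"
    and "1 \<le> i" "i \<le> 2 * n" "1 \<le> t" "t \<le> 2 * n"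
    and "1 \<le> j" "j \<le> 2 * n" "1 \<le> s" "s \<le> 2 * n"
  shows "(Var i j * Var t s - Var i s * Var t j :: 'a mpoly) \<in>
    ideal_gen (Iprime_gens n r h
      \<union> {Var i' j' * Var t' s' - Var i' s' * Var t' j' | i' t' j' s'.
           i' \<in> {n - r + 1..n + r} \<and> t' \<in> {n - r + 1..n + r}
         \<and> j' \<in> {1..2 * n} - {n - r + 1..n + r} \<and> s' \<in> {1..2 * n} - {n - r + 1..n + r}}
      \<union> {mtrace (block Xmat (n - r) (n - r)) (2 * r) + Const (2 * \<pi>)}
      \<union> entries (msub (mmul (n - r) (mmul (n - r) (block Xmat (n - r) (n + r)) (antiJ (n - r)))
                              (mtrans (block Xmat (n - r) 0)))
                        (mmul (2 * r) (block Xmat (n - r) (n - r)) (antiJ (2 * r))))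
                 (2 * r) (2 * r))"
proof (rule minor_mem_ideal_gen)
  show "r \<le> n"
    using assms(3) by linarith
qed (use assms(7-14) in auto)+

end
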